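(* Let $F,H\in\mathbb{R}^{n\times n}$ and let $I\subset\mathbb{R}$ be an interval such that $F+tH\in\mathrm{GL}^+(n)$ for all $t\in I$. Let $\hat\lambda\colon I\to\mathbb{R}^n$, $\hat\lambda(t)=(\hat\lambda_1(F+tH),\dots,\hat\lambda_n(F+tH))$, be the vector of ordered singular values $\hat\lambda_1(F+tH)\geq\dots\geq\hat\lambda_n(F+tH)$. Then $\hat\lambda$ is both left-differentiable and right-differentiable on the interior of $I$. Moreover, for any $t$ in the interior of $I$ and any value $\lambda\in\{\hat\lambda_1(t),\dots,\hat\lambda_n(t)\}$, let $i_{\min}^\lambda\leq i_{\max}^\lambda$ be the indices such that $\hat\lambda_i(t)=\lambda$ if and only if $i\in\mathcal I_\lambda:=\{i_{\min}^\lambda,\dots,i_{\max}^\lambda\}$. Then $$\sum_{i\in\mathcal I_\lambda}\partial^-\hat\lambda_i(t)=\sum_{i\in\mathcal I_\lambda}\partial^+\hat\lambda_i(t)$$ and $$\sum_{i=i_{\min}^\lambda}^{k}\partial^-\hat\lambda_i(t)\leq\sum_{i=i_{\min}^\lambda}^{k}\partial^+\hat\lambda_i(t)\quad\text{for all }k\in\{i_{\min}^\lambda,\dots,i_{\max}^\lambda\}.$$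
   Context: $\mathrm{GL}^+(n)$ is the group of real invertible $n\times n$ matrices with positive determinant. For a real function $f$, $\partial^-f(t)=\lim_{h\uparrow0}\frac{f(t+h)-f(t)}{h}$ and $\partial^+f(t)=\lim_{h\downarrow0}\frac{f(t+h)-f(t)}{h}$. *)

theory Defs
  imports "HOL-Analysis.Analysis"
begin

text \<open>Ordered singular values of a square matrix A, indexed by 1..n (n = CARD('n)):
  sigma_1 >= ... >= sigma_n >= 0, the square roots of the eigenvalues of A^T A counted
  with algebraic multiplicity, i.e. det (x I - A^T A) = prod_i (x - sigma_i^2).\<close>
definition sing_vals :: "real^'n^'n \<Rightarrow> nat \<Rightarrow> real" where
  "sing_vals A = (THE s.
      (\<forall>i j. 1 \<le> i \<longrightarrow> i \<le> j \<longrightarrow> j \<le> CARD('n) \<longrightarrow> s j \<le> s i) \<and>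
      (\<forall>i. 1 \<le> i \<longrightarrow> i \<le> CARD('n) \<longrightarrow> 0 \<le> s i) \<and>
      (\<forall>i. (i = 0 \<or> CARD('n) < i) \<longrightarrow> s i = 0) \<and>
      (\<forall>x::real. det (x *\<^sub>R mat 1 - transpose A ** A) = (\<Prod>i=1..CARD('n). x - (s i)\<^sup>2)))"

end

theory Submission
  imports Defs
begin

text \<open>Let \<open>S\<^sub>m(s)\<close> be the sum of the \<open>m\<close> largest squared singular values of \<open>F + s H\<close>.
  By Ky Fan's maximum principle \<open>S\<^sub>m(s)\<close> is the maximum over orthonormal \<open>m\<close>-frames \<open>u\<close> of
  \<open>\<Sum>\<^sub>j |(F + s H) u\<^sub>j|\<^sup>2\<close>, a maximum of convex quadratics in \<open>s\<close>; so \<open>S\<^sub>m\<close> is convex and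
  has one-sided derivatives with \<open>\<partial>\<^sup>-S\<^sub>m \<le> \<partial>\<^sup>+S\<^sub>m\<close>. If the \<open>m\<close>-th and \<open>(m+1)\<close>-st singular
  values differ at \<open>t\<close>, a quantitative form of Ky Fan's bound squeezes \<open>S\<^sub>m\<close> between two
  quadratics touching at \<open>t\<close>, so \<open>S\<^sub>m\<close> is differentiable there.
  Since \<open>\<lambda>\<^sub>i = sqrt (S\<^sub>i - S\<^sub>i\<^sub>-\<^sub>1)\<close> and \<open>\<lambda>\<^sub>i > 0\<close> by invertibility, each \<open>\<lambda>\<^sub>i\<close> has
  one-sided derivatives \<open>(\<partial>\<^sup>\<plusminus>S\<^sub>i - \<partial>\<^sup>\<plusminus>S\<^sub>i\<^sub>-\<^sub>1) / (2 \<lambda>\<^sub>i)\<close>. Over a block of equal singular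
  values these telescope to differences of derivatives of \<open>S\<^sub>m\<close> at the two ends of the block,
  where gaps force left and right derivatives to agree.\<close>

section \<open>Spectral theorem for symmetric matrices\<close>

definition orthonormal_on :: "nat set \<Rightarrow> (nat \<Rightarrow> real^'n) \<Rightarrow> bool" where
  "orthonormal_on K v \<longleftrightarrow> (\<forall>i\<in>K. \<forall>j\<in>K. v i \<bullet> v j = (if i = j then 1 else 0))"

lemma orthonormal_on_subset: "K' \<subseteq> K \<Longrightarrow> orthonormal_on K v \<Longrightarrow> orthonormal_on K' v"
  unfolding orthonormal_on_def by blast

lemma orthonormal_on_inner_self: "orthonormal_on K v \<Longrightarrow> i \<in> K \<Longrightarrow> v i \<bullet> v i = 1"
  unfolding orthonormal_on_def by simp

lemma orthonormal_on_extend: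
  assumes "orthonormal_on {1..k} v" "x \<bullet> x = 1" "\<forall>i\<in>{1..k}. v i \<bullet> x = 0"
  shows "orthonormal_on {1..Suc k} (v(Suc k := x))"
  using assms by (auto simp: orthonormal_on_def inner_commute le_Suc_eq)

lemma inner_transpose_matrix_vector:
  fixes A :: "real^'n^'m"
  shows "x \<bullet> (transpose A *v y) = (A *v x) \<bullet> y"
  by (metis dot_lmul_matrix vector_transpose_matrix)

lemma quadratic_form_add_scaleR:
  fixes M :: "real^'n^'n"
  assumes "transpose M = M"
  shows "(x + e *\<^sub>R w) \<bullet> (M *v (x + e *\<^sub>R w)) =
     x \<bullet> (M *v x) + 2 * e * (w \<bullet> (M *v x)) + e\<^sup>2 * (w \<bullet> (M *v w))"
proof -
  have "x \<bullet> (M *v w) = w \<bullet> (M *v x)"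
    using inner_transpose_matrix_vector[of x M w] assms by (simp add: inner_commute)
  then show ?thesis
    by (simp add: matrix_vector_right_distrib matrix_vector_mult_scaleR inner_add_left
        inner_add_right power2_eq_square algebra_simps)
qed

lemma rayleigh_maximiser_eigenvector:
  fixes M :: "real^'n^'n"
  assumes sym: "transpose M = M" and T: "subspace T" and x: "x \<in> T" "x \<bullet> x = 1"
    and residual: "M *v x - (x \<bullet> (M *v x)) *\<^sub>R x \<in> T"
    and max: "\<And>y. y \<in> T \<Longrightarrow> y \<bullet> (M *v y) \<le> (x \<bullet> (M *v x)) * (y \<bullet> y)"
  shows "M *v x = (x \<bullet> (M *v x)) *\<^sub>R x"
proof -
  define l where "l = x \<bullet> (M *v x)"
  define w where "w = M *v x - l *\<^sub>R x"
  have xw: "x \<bullet> w = 0" by (simp add: w_def inner_diff_right l_def x)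
  have wMx: "w \<bullet> (M *v x) = w \<bullet> w"
    using xw by (simp add: w_def inner_diff_left inner_diff_right inner_commute)
  have "w = 0"
  proof (rule ccontr)
    assume "w \<noteq> 0"
    then have ww: "w \<bullet> w > 0" by simp
    define c where "c = l * (w \<bullet> w) - w \<bullet> (M *v w)"
    text \<open>For this step size the first-order gain \<open>2 e (w \<bullet> w)\<close> of moving along \<open>w\<close>
      beats the second-order loss \<open>e\<^sup>2 c\<close>.\<close>
    define e where "e = (w \<bullet> w) / (\<bar>c\<bar> + 1)"
    have e0: "e > 0" using ww by (simp add: e_def)
    have "x + e *\<^sub>R w \<in> T"
      using T x(1) residual by (simp add: w_def l_def subspace_add subspace_scale)
    then have "(x + e *\<^sub>R w) \<bullet> (M *v (x + e *\<^sub>R w)) \<le> l * ((x + e *\<^sub>R w) \<bullet> (x + e *\<^sub>R w))"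
      unfolding l_def by (rule max)
    moreover have "(x + e *\<^sub>R w) \<bullet> (x + e *\<^sub>R w) = 1 + e\<^sup>2 * (w \<bullet> w)"
      using x(2) xw by (simp add: inner_add_left inner_add_right inner_commute power2_eq_square)
    ultimately have "l + 2 * e * (w \<bullet> w) + e\<^sup>2 * (w \<bullet> (M *v w)) \<le> l * (1 + e\<^sup>2 * (w \<bullet> w))"
      using quadratic_form_add_scaleR[OF sym, of x e w] wMx by (simp add: l_def)
    then have "2 * e * (w \<bullet> w) \<le> e\<^sup>2 * c" by (simp add: c_def algebra_simps)
    then have "2 * (w \<bullet> w) \<le> e * \<bar>c\<bar>"
      using e0 by (simp add: power2_eq_square) (smt (verit) mult_left_mono abs_ge_self)
    also have "e * \<bar>c\<bar> < w \<bullet> w"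
      using ww by (simp add: e_def field_simps)
    finally show False using ww by simp
  qed
  then show ?thesis by (simp add: w_def l_def)
qed

lemma unit_vector_orthogonal_exists:
  fixes v :: "nat \<Rightarrow> real^'n"
  assumes "k < CARD('n)"
  shows "\<exists>z. norm z = 1 \<and> (\<forall>i\<in>{1..k}. v i \<bullet> z = 0)"
proof -
  have "dim (v ` {1..k}) \<le> card (v ` {1..k})" by (rule dim_le_card') simp
  also have "\<dots> \<le> k" using card_image_le[of "{1..k}" v] by simp
  finally have "dim (v ` {1..k}) < DIM(real^'n)" using assms by simp
  then obtain z where z: "z \<noteq> 0" "\<And>y. y \<in> span (v ` {1..k}) \<Longrightarrow> orthogonal z y"
    by (rule orthogonal_to_subspace_exists) blast
  have "v i \<bullet> z = 0" if "i \<in> {1..k}" for i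
    using z(2)[OF span_base, of "v i"] that by (auto simp: orthogonal_def inner_commute)
  then show ?thesis using z(1) by (intro exI[of _ "z /\<^sub>R norm z"]) auto
qed

lemma symmetric_max_eigenvector_orthogonal:
  fixes M :: "real^'n^'n" and v :: "nat \<Rightarrow> real^'n"
  assumes sym: "transpose M = M" and k: "k < CARD('n)"
    and eig: "\<forall>i\<in>{1..k}. M *v v i = \<mu> i *\<^sub>R v i"
  obtains x where "norm x = 1" "\<forall>i\<in>{1..k}. v i \<bullet> x = 0" "M *v x = (x \<bullet> (M *v x)) *\<^sub>R x"
    "\<And>y. norm y = 1 \<Longrightarrow> \<forall>i\<in>{1..k}. v i \<bullet> y = 0 \<Longrightarrow> y \<bullet> (M *v y) \<le> x \<bullet> (M *v x)"
proof -
  define T where "T = {x::real^'n. \<forall>i\<in>{1..k}. v i \<bullet> x = 0}"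
  define S where "S = sphere (0::real^'n) 1 \<inter> T"
  obtain z where "norm z = 1" "\<forall>i\<in>{1..k}. v i \<bullet> z = 0"
    using unit_vector_orthogonal_exists[OF k] by blast
  then have Sne: "S \<noteq> {}" by (auto simp: S_def T_def)
  have cS: "compact S"
  proof -
    have "T = (\<Inter>i\<in>{1..k}. {x. v i \<bullet> x = 0})" by (auto simp: T_def)
    then show ?thesis
      unfolding S_def by (simp add: compact_Int_closed closed_INT closed_hyperplane)
  qed
  have cont: "continuous_on S (\<lambda>x. x \<bullet> (M *v x))"
    by (intro continuous_intros linear_continuous_on matrix_vector_mul_bounded_linear)
  obtain x where xS: "x \<in> S" and xmax: "\<And>y. y \<in> S \<Longrightarrow> y \<bullet> (M *v y) \<le> x \<bullet> (M *v x)"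
    using continuous_attains_sup[OF cS Sne cont] by blast
  have nx: "norm x = 1" and xT: "x \<in> T" using xS by (auto simp: S_def)
  have max: "y \<bullet> (M *v y) \<le> (x \<bullet> (M *v x)) * (y \<bullet> y)" if "y \<in> T" for y
  proof (cases "y = 0")
    case False
    then have "y /\<^sub>R norm y \<in> S" using that by (simp add: S_def T_def)
    then have "(y /\<^sub>R norm y) \<bullet> (M *v (y /\<^sub>R norm y)) \<le> x \<bullet> (M *v x)" by (rule xmax)
    then show ?thesis using False
      by (simp add: matrix_vector_mult_scaleR dot_square_norm power2_eq_square field_simps)
  qed simp
  have "subspace T" unfolding subspace_def T_def by (simp add: inner_add_right)
  moreover have "M *v x - (x \<bullet> (M *v x)) *\<^sub>R x \<in> T"
  proof -
    have "v i \<bullet> (M *v x) = \<mu> i * (v i \<bullet> x)" if "i \<in> {1..k}" for i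
      using inner_transpose_matrix_vector[of "v i" M x] sym eig that by simp
    then show ?thesis using xT by (simp add: T_def inner_diff_right)
  qed
  ultimately have "M *v x = (x \<bullet> (M *v x)) *\<^sub>R x"
    using rayleigh_maximiser_eigenvector[OF sym _ xT _ _ max] nx by (simp add: dot_square_norm)
  then show ?thesis using that nx xT xmax by (auto simp: S_def T_def)
qed

lemma symmetric_eigenvectors_upto:
  fixes M :: "real^'n^'n"
  assumes sym: "transpose M = M"
  shows "k \<le> CARD('n) \<Longrightarrow> \<exists>v \<mu>. orthonormal_on {1..k} v \<and> (\<forall>i\<in>{1..k}. M *v v i = \<mu> i *\<^sub>R v i) \<and>
     (\<forall>i j. 1 \<le> i \<longrightarrow> i \<le> j \<longrightarrow> j \<le> k \<longrightarrow> \<mu> j \<le> \<mu> i) \<and>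
     (k \<ge> 1 \<longrightarrow> (\<forall>y. norm y = 1 \<longrightarrow> (\<forall>i\<in>{1..k-1}. v i \<bullet> y = 0) \<longrightarrow> y \<bullet> (M *v y) \<le> \<mu> k))"
proof (induction k)
  case 0
  show ?case by (auto simp: orthonormal_on_def)
next
  case (Suc k)
  then obtain v \<mu> where on: "orthonormal_on {1..k} v" and eig: "\<forall>i\<in>{1..k}. M *v v i = \<mu> i *\<^sub>R v i"
    and desc: "\<forall>i j. 1 \<le> i \<longrightarrow> i \<le> j \<longrightarrow> j \<le> k \<longrightarrow> \<mu> j \<le> \<mu> i"
    and max: "k \<ge> 1 \<longrightarrow> (\<forall>y. norm y = 1 \<longrightarrow> (\<forall>i\<in>{1..k-1}. v i \<bullet> y = 0) \<longrightarrow> y \<bullet> (M *v y) \<le> \<mu> k)"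
    by auto
  obtain x where nx: "norm x = 1" and xT: "\<forall>i\<in>{1..k}. v i \<bullet> x = 0"
    and ex: "M *v x = (x \<bullet> (M *v x)) *\<^sub>R x"
    and xmax: "\<And>y. norm y = 1 \<Longrightarrow> \<forall>i\<in>{1..k}. v i \<bullet> y = 0 \<Longrightarrow> y \<bullet> (M *v y) \<le> x \<bullet> (M *v x)"
    using symmetric_max_eigenvector_orthogonal[OF sym _ eig] Suc.prems by (metis Suc_le_eq)
  define v' where "v' = v(Suc k := x)"
  define \<mu>' where "\<mu>' = \<mu>(Suc k := x \<bullet> (M *v x))"
  have xx: "x \<bullet> x = 1" using nx by (simp add: dot_square_norm)
  have last_le: "\<mu>' (Suc k) \<le> \<mu> k" if "k \<ge> 1"
  proof -
    have "\<forall>i\<in>{1..k-1}. v i \<bullet> x = 0" using xT by auto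
    then show ?thesis using max that nx by (simp add: \<mu>'_def)
  qed
  have "orthonormal_on {1..Suc k} v'"
    unfolding v'_def using on xx xT by (rule orthonormal_on_extend)
  moreover have "\<forall>i\<in>{1..Suc k}. M *v v' i = \<mu>' i *\<^sub>R v' i"
    using eig ex by (auto simp: v'_def \<mu>'_def le_Suc_eq)
  moreover have "\<forall>i j. 1 \<le> i \<longrightarrow> i \<le> j \<longrightarrow> j \<le> Suc k \<longrightarrow> \<mu>' j \<le> \<mu>' i"
  proof (intro allI impI)
    fix i j assume ij: "1 \<le> i" "i \<le> j" "j \<le> Suc k"
    show "\<mu>' j \<le> \<mu>' i"
    proof (cases "j = Suc k \<and> i \<noteq> Suc k")
      case True
      then have "\<mu> k \<le> \<mu> i" "k \<ge> 1" using desc ij by auto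
      then show ?thesis using last_le True by (simp add: \<mu>'_def)
    next
      case False
      then show ?thesis using ij desc by (auto simp: \<mu>'_def)
    qed
  qed
  moreover have "\<forall>y. norm y = 1 \<longrightarrow> (\<forall>i\<in>{1..Suc k-1}. v' i \<bullet> y = 0) \<longrightarrow> y \<bullet> (M *v y) \<le> \<mu>' (Suc k)"
    using xmax by (simp add: v'_def \<mu>'_def)
  ultimately show ?case by blast
qed

lemma symmetric_orthonormal_eigenbasis:
  fixes M :: "real^'n^'n"
  assumes "transpose M = M"
  obtains v \<mu> where "orthonormal_on {1..CARD('n)} v" "\<forall>i\<in>{1..CARD('n)}. M *v v i = \<mu> i *\<^sub>R v i"
     "\<forall>i j. 1 \<le> i \<longrightarrow> i \<le> j \<longrightarrow> j \<le> CARD('n) \<longrightarrow> \<mu> j \<le> \<mu> i"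
  using symmetric_eigenvectors_upto[OF assms, of "CARD('n)"] by blast

lemma orthonormal_basis_orthogonal_eq_0:
  fixes v :: "nat \<Rightarrow> real^'n"
  assumes on: "orthonormal_on {1..CARD('n)} v" and x: "\<forall>i\<in>{1..CARD('n)}. v i \<bullet> x = 0"
  shows "x = 0"
proof -
  define B where "B = v ` {1..CARD('n)}"
  have "inj_on v {1..CARD('n)}"
    using on unfolding orthonormal_on_def by (intro inj_onI) (metis one_neq_zero)
  then have card: "card B = CARD('n)" by (simp add: B_def card_image)
  have "pairwise orthogonal B"
    using on by (auto simp: pairwise_def B_def orthonormal_on_def orthogonal_def)
  moreover have "0 \<notin> B"
    using on orthonormal_on_inner_self[OF on] by (force simp: B_def)
  ultimately have "independent B" by (rule pairwise_orthogonal_independent)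
  then have "x \<in> span B"
    using card_ge_dim_independent[of B UNIV] card by auto
  moreover have "\<And>y. y \<in> B \<Longrightarrow> orthogonal x y"
    using x by (auto simp: B_def orthogonal_def inner_commute)
  ultimately have "orthogonal x x" by (rule orthogonal_to_span)
  then show "x = 0" by (simp add: orthogonal_def)
qed

lemma orthonormal_basis_expansion:
  fixes v :: "nat \<Rightarrow> real^'n"
  assumes on: "orthonormal_on {1..CARD('n)} v"
  shows "x = (\<Sum>i=1..CARD('n). (v i \<bullet> x) *\<^sub>R v i)"
proof -
  have "v j \<bullet> (\<Sum>i=1..CARD('n). (v i \<bullet> x) *\<^sub>R v i) = v j \<bullet> x" if j: "j \<in> {1..CARD('n)}" for j
  proof -
    have "v j \<bullet> (\<Sum>i=1..CARD('n). (v i \<bullet> x) *\<^sub>R v i) = (\<Sum>i=1..CARD('n). if i = j then v j \<bullet> x else 0)"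
      unfolding inner_sum_right using on j by (intro sum.cong refl) (auto simp: orthonormal_on_def)
    then show ?thesis using j by simp
  qed
  then have "x - (\<Sum>i=1..CARD('n). (v i \<bullet> x) *\<^sub>R v i) = 0"
    by (intro orthonormal_basis_orthogonal_eq_0[OF on]) (simp add: inner_diff_right)
  then show ?thesis by simp
qed

lemma orthonormal_basis_parseval:
  fixes v :: "nat \<Rightarrow> real^'n"
  assumes "orthonormal_on {1..CARD('n)} v"
  shows "(\<Sum>i=1..CARD('n). (v i \<bullet> x)\<^sup>2) = x \<bullet> x"
proof -
  have "x \<bullet> x = x \<bullet> (\<Sum>i=1..CARD('n). (v i \<bullet> x) *\<^sub>R v i)"
    using orthonormal_basis_expansion[OF assms, of x] by simp
  then show ?thesis by (simp add: inner_sum_right power2_eq_square inner_commute)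
qed

lemma quadratic_form_eigenbasis:
  fixes v :: "nat \<Rightarrow> real^'n" and M :: "real^'n^'n"
  assumes on: "orthonormal_on {1..CARD('n)} v" and eig: "\<forall>i\<in>{1..CARD('n)}. M *v v i = \<mu> i *\<^sub>R v i"
  shows "x \<bullet> (M *v x) = (\<Sum>i=1..CARD('n). \<mu> i * (v i \<bullet> x)\<^sup>2)"
proof -
  have "M *v x = M *v (\<Sum>i=1..CARD('n). (v i \<bullet> x) *\<^sub>R v i)"
    using orthonormal_basis_expansion[OF on, of x] by simp
  also have "\<dots> = (\<Sum>i=1..CARD('n). (v i \<bullet> x) *\<^sub>R (\<mu> i *\<^sub>R v i))"
    using eig by (simp add: vec.sum matrix_vector_mult_scaleR)
  finally show ?thesis
    by (simp add: inner_sum_right power2_eq_square inner_commute mult_ac)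
qed

lemma bessel_inequality:
  fixes u :: "nat \<Rightarrow> real^'n"
  assumes on: "orthonormal_on {1..m} u"
  shows "(\<Sum>j=1..m. (u j \<bullet> y)\<^sup>2) \<le> y \<bullet> y"
proof -
  define p where "p = (\<Sum>j=1..m. (u j \<bullet> y) *\<^sub>R u j)"
  have "p \<bullet> u k = u k \<bullet> y" if k: "k \<in> {1..m}" for k
  proof -
    have "p \<bullet> u k = (\<Sum>j=1..m. if j = k then u k \<bullet> y else 0)"
      unfolding p_def inner_sum_left using on k by (intro sum.cong refl) (auto simp: orthonormal_on_def)
    then show ?thesis using k by simp
  qed
  then have pp: "p \<bullet> p = (\<Sum>j=1..m. (u j \<bullet> y)\<^sup>2)"
    by (simp add: p_def inner_sum_right power2_eq_square)
  have yp: "y \<bullet> p = (\<Sum>j=1..m. (u j \<bullet> y)\<^sup>2)"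
    by (simp add: p_def inner_sum_right power2_eq_square inner_commute)
  have "0 \<le> (y - p) \<bullet> (y - p)" by simp
  also have "\<dots> = y \<bullet> y - 2 * (y \<bullet> p) + p \<bullet> p"
    by (simp add: inner_diff_left inner_diff_right inner_commute)
  finally show ?thesis using pp yp by simp
qed

section \<open>Singular values as square roots of eigenvalues of the Gram matrix\<close>

lemma quadratic_form_transpose_mult:
  fixes A :: "real^'n^'m"
  shows "x \<bullet> ((transpose A ** A) *v x) = (norm (A *v x))\<^sup>2"
proof -
  have "x \<bullet> ((transpose A ** A) *v x) = x \<bullet> (transpose A *v (A *v x))"
    by (simp only: matrix_vector_mul_assoc)
  also have "\<dots> = (norm (A *v x))\<^sup>2"
    by (simp only: inner_transpose_matrix_vector power2_norm_eq_inner)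
  finally show ?thesis .
qed

lemma transpose_mult_mult_entry:
  fixes Q N :: "real^'n^'n"
  shows "(transpose Q ** N ** Q) $ a $ b = (\<chi> c. Q$c$a) \<bullet> (N *v (\<chi> c. Q$c$b))"
proof -
  have "(transpose Q ** N ** Q) $ a $ b = (\<Sum>d\<in>UNIV. \<Sum>c\<in>UNIV. Q$c$a * N$c$d * Q$d$b)"
    unfolding matrix_matrix_mult_def transpose_def by (simp add: sum_distrib_right)
  also have "\<dots> = (\<Sum>c\<in>UNIV. Q$c$a * (\<Sum>d\<in>UNIV. N$c$d * Q$d$b))"
    by (subst sum.swap) (simp add: sum_distrib_left mult.assoc)
  finally show ?thesis
    unfolding matrix_vector_mult_def inner_vec_def by simp
qed

lemma det_char_eigenbasis:
  fixes M :: "real^'n^'n"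
  assumes on: "orthonormal_on {1..CARD('n)} v" and eig: "\<forall>i\<in>{1..CARD('n)}. M *v v i = \<mu> i *\<^sub>R v i"
  shows "det (x *\<^sub>R mat 1 - M) = (\<Prod>i=1..CARD('n). x - \<mu> i)"
proof -
  obtain e :: "'n \<Rightarrow> nat" where e: "bij_betw e UNIV {1..CARD('n)}"
    using finite_same_card_bij[of "UNIV::'n set" "{1..CARD('n)}"] by auto
  have eb: "e b \<in> {1..CARD('n)}" for b using e by (auto simp: bij_betw_def)
  have einj: "e a = e b \<longleftrightarrow> a = b" for a b using e by (auto simp: bij_betw_def inj_on_def)
  define Q :: "real^'n^'n" where "Q = (\<chi> c b. v (e b) $ c)"
  have colQ: "(\<chi> c. Q$c$b) = v (e b)" for b by (simp add: Q_def vec_eq_iff)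
  have "(transpose Q ** Q) $ a $ b = (\<chi> c. Q$c$a) \<bullet> (\<chi> c. Q$c$b)" for a b
    by (simp add: matrix_matrix_mult_def transpose_def inner_vec_def)
  then have "(transpose Q ** Q) $ a $ b = (mat 1 :: real^'n^'n) $ a $ b" for a b
    using on eb[of a] eb[of b] einj[of a b] by (simp add: colQ orthonormal_on_def mat_def)
  then have "transpose Q ** Q = mat 1" by (simp add: vec_eq_iff)
  then have dQ: "det (transpose Q) * det Q = 1"
    by (metis det_I det_mul)
  define N where "N = x *\<^sub>R mat 1 - M"
  have "(transpose Q ** N ** Q) $ a $ b = (if a = b then x - \<mu> (e b) else 0)" for a b
  proof -
    have "(transpose Q ** N ** Q) $ a $ b = (x - \<mu> (e b)) * (v (e a) \<bullet> v (e b))"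
      using eig eb[of b] by (simp add: transpose_mult_mult_entry colQ N_def matrix_vector_mult_diff_rdistrib
          scaleR_matrix_vector_assoc[symmetric] matrix_vector_mul_lid inner_diff_right algebra_simps)
    then show ?thesis
      using on eb[of a] eb[of b] einj[of a b] by (simp add: orthonormal_on_def)
  qed
  then have "det (transpose Q ** N ** Q) = (\<Prod>a\<in>UNIV. x - \<mu> (e a))"
    by (subst det_diagonal) simp_all
  also have "\<dots> = (\<Prod>i=1..CARD('n). x - \<mu> i)"
    using prod.reindex_bij_betw[OF e, of "\<lambda>i. x - \<mu> i"] by simp
  finally have "det (transpose Q ** N ** Q) = (\<Prod>i=1..CARD('n). x - \<mu> i)" .
  moreover have "det (transpose Q ** N ** Q) = det N * (det (transpose Q) * det Q)"
    by (simp only: det_mul mult_ac)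
  ultimately show ?thesis using dQ by (simp add: N_def)
qed

lemma sorted_roots_unique:
  fixes a b :: "nat \<Rightarrow> real"
  shows "(\<forall>i j. 1 \<le> i \<longrightarrow> i \<le> j \<longrightarrow> j \<le> n \<longrightarrow> a j \<le> a i) \<Longrightarrow>
    (\<forall>i j. 1 \<le> i \<longrightarrow> i \<le> j \<longrightarrow> j \<le> n \<longrightarrow> b j \<le> b i) \<Longrightarrow>
    (\<forall>x. (\<Prod>i=1..n. x - a i) = (\<Prod>i=1..n. x - b i)) \<Longrightarrow> \<forall>i\<in>{1..n}. a i = b i"
proof (induction n)
  case (Suc n)
  have split_last: "(\<Prod>i=1..Suc n. x - f i) = (\<Prod>i=1..n. x - f i) * (x - f (Suc n))"
    for x and f :: "nat \<Rightarrow> real"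
    by (simp add: prod.cl_ivl_Suc)
  have root: "\<exists>i\<in>{1..Suc n}. g i = f (Suc n)"
    if "\<forall>x. (\<Prod>i=1..Suc n. x - f i) = (\<Prod>i=1..Suc n. x - g i)" for f g :: "nat \<Rightarrow> real"
  proof -
    have "(\<Prod>i=1..Suc n. f (Suc n) - g i) = 0"
      using that[rule_format, of "f (Suc n)"] by (simp add: split_last)
    then show ?thesis by (simp only: prod_zero_iff finite_atLeastAtMost) auto
  qed
  obtain i where i: "i \<in> {1..Suc n}" "b i = a (Suc n)" using root[OF Suc.prems(3)] by blast
  obtain j where j: "j \<in> {1..Suc n}" "a j = b (Suc n)" using root[of b a] Suc.prems(3) by metis
  have "b (Suc n) \<le> b i" "a (Suc n) \<le> a j" using i j Suc.prems(1,2) by auto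
  then have last: "a (Suc n) = b (Suc n)" using i(2) j(2) by linarith
  define f where "f x = (\<Prod>i=1..n. x - a i) - (\<Prod>i=1..n. x - b i)" for x
  have f0: "f x = 0" if "x \<noteq> a (Suc n)" for x
    using Suc.prems(3)[rule_format, of x] that last by (simp add: split_last f_def)
  text \<open>The remaining factors agree off one point, hence everywhere by continuity.\<close>
  have "isCont f (a (Suc n))" unfolding f_def by (intro continuous_intros)
  moreover have "(f \<longlongrightarrow> 0) (at (a (Suc n)))"
    using f0 by (intro tendsto_eventually) (auto simp: eventually_at_filter)
  ultimately have "f (a (Suc n)) = 0"
    using tendsto_unique[OF trivial_limit_at] by (metis isCont_def)
  then have "\<forall>x. (\<Prod>i=1..n. x - a i) = (\<Prod>i=1..n. x - b i)"
    using f0 by (metis eq_iff_diff_eq_0 f_def)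
  moreover have "\<forall>i j. 1 \<le> i \<longrightarrow> i \<le> j \<longrightarrow> j \<le> n \<longrightarrow> a j \<le> a i"
    and "\<forall>i j. 1 \<le> i \<longrightarrow> i \<le> j \<longrightarrow> j \<le> n \<longrightarrow> b j \<le> b i"
    using Suc.prems(1,2) by auto
  ultimately have "\<forall>i\<in>{1..n}. a i = b i" using Suc.IH by blast
  then show ?case using last by (auto simp: le_Suc_eq)
qed simp

lemma gram_eigenvalue_nonneg:
  fixes A :: "real^'n^'m"
  assumes "(transpose A ** A) *v v = \<mu> *\<^sub>R v" and "v \<bullet> v = 1"
  shows "\<mu> \<ge> 0"
proof -
  have "(norm (A *v v))\<^sup>2 = \<mu>"
    using quadratic_form_transpose_mult[of v A] assms by simp
  then show ?thesis by (metis zero_le_power2)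
qed

lemma sing_vals_eq_sqrt_eigenvalues:
  fixes A :: "real^'n^'n"
  assumes on: "orthonormal_on {1..CARD('n)} v"
    and eig: "\<forall>i\<in>{1..CARD('n)}. (transpose A ** A) *v v i = \<mu> i *\<^sub>R v i"
    and desc: "\<forall>i j. 1 \<le> i \<longrightarrow> i \<le> j \<longrightarrow> j \<le> CARD('n) \<longrightarrow> \<mu> j \<le> \<mu> i"
  shows "sing_vals A = (\<lambda>i. if i \<in> {1..CARD('n)} then sqrt (\<mu> i) else 0)"
proof -
  define s0 where "s0 = (\<lambda>i. if i \<in> {1..CARD('n)} then sqrt (\<mu> i) else 0)"
  have \<mu>_nonneg: "\<mu> i \<ge> 0" if "i \<in> {1..CARD('n)}" for i
    using gram_eigenvalue_nonneg eig on orthonormal_on_inner_self that by blast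
  have char: "det (x *\<^sub>R mat 1 - transpose A ** A) = (\<Prod>i=1..CARD('n). x - \<mu> i)" for x
    by (rule det_char_eigenbasis[OF on eig])
  show ?thesis
    unfolding sing_vals_def s0_def[symmetric]
  proof (rule the_equality)
    have "(\<Prod>i=1..CARD('n). x - (s0 i)\<^sup>2) = (\<Prod>i=1..CARD('n). x - \<mu> i)" for x
      by (intro prod.cong refl) (simp add: s0_def \<mu>_nonneg)
    then show "(\<forall>i j. 1 \<le> i \<longrightarrow> i \<le> j \<longrightarrow> j \<le> CARD('n) \<longrightarrow> s0 j \<le> s0 i) \<and>
      (\<forall>i. 1 \<le> i \<longrightarrow> i \<le> CARD('n) \<longrightarrow> 0 \<le> s0 i) \<and>
      (\<forall>i. (i = 0 \<or> CARD('n) < i) \<longrightarrow> s0 i = 0) \<and>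
      (\<forall>x. det (x *\<^sub>R mat 1 - transpose A ** A) = (\<Prod>i=1..CARD('n). x - (s0 i)\<^sup>2))"
      using desc \<mu>_nonneg by (auto simp: s0_def char)
  next
    fix s assume "(\<forall>i j. 1 \<le> i \<longrightarrow> i \<le> j \<longrightarrow> j \<le> CARD('n) \<longrightarrow> s j \<le> s i) \<and>
      (\<forall>i. 1 \<le> i \<longrightarrow> i \<le> CARD('n) \<longrightarrow> 0 \<le> s i) \<and>
      (\<forall>i. (i = 0 \<or> CARD('n) < i) \<longrightarrow> s i = 0) \<and>
      (\<forall>x. det (x *\<^sub>R mat 1 - transpose A ** A) = (\<Prod>i=1..CARD('n). x - (s i)\<^sup>2))"
    then have anti: "\<forall>i j. 1 \<le> i \<longrightarrow> i \<le> j \<longrightarrow> j \<le> CARD('n) \<longrightarrow> s j \<le> s i"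
      and nonneg: "\<forall>i. 1 \<le> i \<longrightarrow> i \<le> CARD('n) \<longrightarrow> 0 \<le> s i"
      and outside: "\<forall>i. (i = 0 \<or> CARD('n) < i) \<longrightarrow> s i = 0"
      and roots: "\<forall>x. (\<Prod>i=1..CARD('n). x - (s i)\<^sup>2) = (\<Prod>i=1..CARD('n). x - \<mu> i)"
      by (simp_all add: char)
    have "\<forall>i j. 1 \<le> i \<longrightarrow> i \<le> j \<longrightarrow> j \<le> CARD('n) \<longrightarrow> (s j)\<^sup>2 \<le> (s i)\<^sup>2"
      using anti nonneg by (auto intro: power_mono)
    then have "\<forall>i\<in>{1..CARD('n)}. (s i)\<^sup>2 = \<mu> i"
      using sorted_roots_unique[OF _ desc roots] by blast
    then have "s i = s0 i" for i
      using nonneg outside real_sqrt_unique[of "s i" "\<mu> i"]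
      by (cases "i \<in> {1..CARD('n)}") (auto simp: s0_def not_le)
    then show "s = s0" by blast
  qed
qed

lemma sing_vals_eigenbasis:
  fixes A :: "real^'n^'n"
  obtains v \<mu> where "orthonormal_on {1..CARD('n)} v"
    "\<forall>i\<in>{1..CARD('n)}. (transpose A ** A) *v v i = \<mu> i *\<^sub>R v i"
    "\<forall>i j. 1 \<le> i \<longrightarrow> i \<le> j \<longrightarrow> j \<le> CARD('n) \<longrightarrow> \<mu> j \<le> \<mu> i"
    "\<forall>i\<in>{1..CARD('n)}. (sing_vals A i)\<^sup>2 = \<mu> i \<and> sing_vals A i \<ge> 0"
proof -
  have "transpose (transpose A ** A) = transpose A ** A" by (simp add: matrix_transpose_mul)
  then obtain v \<mu> where on: "orthonormal_on {1..CARD('n)} v"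
    and eig: "\<forall>i\<in>{1..CARD('n)}. (transpose A ** A) *v v i = \<mu> i *\<^sub>R v i"
    and desc: "\<forall>i j. 1 \<le> i \<longrightarrow> i \<le> j \<longrightarrow> j \<le> CARD('n) \<longrightarrow> \<mu> j \<le> \<mu> i"
    by (rule symmetric_orthonormal_eigenbasis)
  moreover have "\<mu> i \<ge> 0" if "i \<in> {1..CARD('n)}" for i
    using gram_eigenvalue_nonneg eig on orthonormal_on_inner_self that by blast
  then have "\<forall>i\<in>{1..CARD('n)}. (sing_vals A i)\<^sup>2 = \<mu> i \<and> sing_vals A i \<ge> 0"
    using sing_vals_eq_sqrt_eigenvalues[OF on eig desc] by simp
  ultimately show ?thesis using that by blast
qed

lemma sing_vals_nonneg:
  fixes A :: "real^'n^'n"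
  shows "sing_vals A i \<ge> 0"
proof -
  obtain v \<mu> where on: "orthonormal_on {1..CARD('n)} v"
    and eig: "\<forall>i\<in>{1..CARD('n)}. (transpose A ** A) *v v i = \<mu> i *\<^sub>R v i"
    and desc: "\<forall>i j. 1 \<le> i \<longrightarrow> i \<le> j \<longrightarrow> j \<le> CARD('n) \<longrightarrow> \<mu> j \<le> \<mu> i"
    and sv: "\<forall>i\<in>{1..CARD('n)}. (sing_vals A i)\<^sup>2 = \<mu> i \<and> sing_vals A i \<ge> 0"
    by (rule sing_vals_eigenbasis)
  then show ?thesis
    using sing_vals_eq_sqrt_eigenvalues[OF on eig desc] by (cases "i \<in> {1..CARD('n)}") auto
qed

lemma sing_vals_antimono:
  fixes A :: "real^'n^'n"
  assumes "1 \<le> i" "i \<le> k" "k \<le> CARD('n)"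
  shows "sing_vals A k \<le> sing_vals A i"
proof -
  obtain v \<mu> where "orthonormal_on {1..CARD('n)} v"
    "\<forall>i\<in>{1..CARD('n)}. (transpose A ** A) *v v i = \<mu> i *\<^sub>R v i"
    and "\<forall>i j. 1 \<le> i \<longrightarrow> i \<le> j \<longrightarrow> j \<le> CARD('n) \<longrightarrow> \<mu> j \<le> \<mu> i"
    and "\<forall>i\<in>{1..CARD('n)}. (sing_vals A i)\<^sup>2 = \<mu> i \<and> sing_vals A i \<ge> 0"
    by (rule sing_vals_eigenbasis)
  with assms have "(sing_vals A k)\<^sup>2 \<le> (sing_vals A i)\<^sup>2" "sing_vals A i \<ge> 0" by auto
  then show ?thesis by (rule power2_le_imp_le)
qed

lemma sing_vals_pos:
  fixes A :: "real^'n^'n"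
  assumes "det A \<noteq> 0" and i: "i \<in> {1..CARD('n)}"
  shows "sing_vals A i > 0"
proof -
  obtain v \<mu> where on: "orthonormal_on {1..CARD('n)} v"
    and eig: "\<forall>i\<in>{1..CARD('n)}. (transpose A ** A) *v v i = \<mu> i *\<^sub>R v i"
    and sv: "\<forall>i\<in>{1..CARD('n)}. (sing_vals A i)\<^sup>2 = \<mu> i \<and> sing_vals A i \<ge> 0"
    by (rule sing_vals_eigenbasis)
  have vv: "v i \<bullet> v i = 1" using on i by (rule orthonormal_on_inner_self)
  have "A *v v i \<noteq> 0"
    using assms(1) vv invertible_det_nz matrix_left_invertible_ker invertible_def
    by (metis inner_zero_left zero_neq_one)
  moreover have "(norm (A *v v i))\<^sup>2 = \<mu> i"
    using quadratic_form_transpose_mult[of "v i" A] eig i vv by simp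
  ultimately have "\<mu> i > 0" by (metis zero_less_norm_iff zero_less_power)
  then show ?thesis using sv i by (metis less_eq_real_def power_zero_numeral zero_less_power2 order.strict_iff_not)
qed

section \<open>Ky Fan's maximum principle\<close>

text \<open>Matrices carry the entrywise (Frobenius) inner product; for an orthonormal family \<open>u\<close>,
  \<open>frame_proj m u\<close> is the orthogonal projection onto the span of \<open>u 1, \<dots>, u m\<close>.\<close>

definition outer_prod :: "real^'n \<Rightarrow> real^'n \<Rightarrow> real^'n^'n" where
  "outer_prod x y = (\<chi> a b. x$a * y$b)"

definition frame_proj :: "nat \<Rightarrow> (nat \<Rightarrow> real^'n) \<Rightarrow> real^'n^'n" where
  "frame_proj m u = (\<Sum>j=1..m. outer_prod (u j) (u j))"

definition sing_sq_sum :: "nat \<Rightarrow> real^'n^'n \<Rightarrow> real" where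
  "sing_sq_sum m A = (\<Sum>i=1..m. (sing_vals A i)\<^sup>2)"

lemma inner_outer_prod_outer_prod: "inner (outer_prod x x) (outer_prod y y) = (x \<bullet> y)\<^sup>2"
proof -
  have "inner (outer_prod x x) (outer_prod y y) = (\<Sum>a\<in>UNIV. \<Sum>b\<in>UNIV. (x$a*y$a) * (x$b*y$b))"
    unfolding inner_vec_def outer_prod_def by (simp add: algebra_simps)
  also have "\<dots> = (\<Sum>a\<in>UNIV. x$a*y$a) * (\<Sum>b\<in>UNIV. x$b*y$b)"
    by (simp add: sum_product)
  finally show ?thesis
    unfolding power2_eq_square inner_vec_def by simp
qed

lemma inner_outer_prod:
  fixes N :: "real^'n^'n"
  shows "inner N (outer_prod x x) = x \<bullet> (N *v x)"
proof -
  have "inner N (outer_prod x x) = (\<Sum>a\<in>UNIV. x$a * (\<Sum>b\<in>UNIV. N$a$b * x$b))"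
    unfolding inner_vec_def outer_prod_def by (simp add: sum_distrib_left algebra_simps)
  then show ?thesis
    unfolding inner_vec_def matrix_vector_mult_def by simp
qed

lemma inner_frame_proj:
  fixes N :: "real^'n^'n"
  shows "inner N (frame_proj m u) = (\<Sum>j=1..m. u j \<bullet> (N *v u j))"
  by (simp add: frame_proj_def inner_sum_right inner_outer_prod)

lemma inner_frame_proj_frame_proj:
  "inner (frame_proj m u) (frame_proj m' w) = (\<Sum>i=1..m. \<Sum>j=1..m'. (u i \<bullet> w j)\<^sup>2)"
  unfolding frame_proj_def inner_sum_left inner_sum_right inner_outer_prod_outer_prod
  by (rule sum.swap)

lemma norm_frame_proj_diff:
  assumes u: "orthonormal_on {1..m} u" and w: "orthonormal_on {1..m} w"
  shows "(norm (frame_proj m u - frame_proj m w))\<^sup>2 = 2 * (m - (\<Sum>i=1..m. \<Sum>j=1..m. (w i \<bullet> u j)\<^sup>2))"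
proof -
  have self: "inner (frame_proj m x) (frame_proj m x) = m" if "orthonormal_on {1..m} x" for x
  proof -
    have "inner (frame_proj m x) (frame_proj m x) = (\<Sum>i=1..m. \<Sum>j=1..m. if i = j then 1 else 0)"
      unfolding inner_frame_proj_frame_proj using that by (intro sum.cong refl) (simp add: orthonormal_on_def)
    then show ?thesis by simp
  qed
  have "inner (frame_proj m u) (frame_proj m w) = (\<Sum>i=1..m. \<Sum>j=1..m. (w i \<bullet> u j)\<^sup>2)"
    unfolding inner_frame_proj_frame_proj by (subst sum.swap) (simp add: inner_commute)
  then show ?thesis
    using self[OF u] self[OF w]
    by (simp add: power2_norm_eq_inner inner_diff_left inner_diff_right inner_commute)
qed

lemma weighted_sum_gap_bound:
  fixes \<mu> w :: "nat \<Rightarrow> real"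
  assumes mn: "m \<le> n" and w: "\<forall>i\<in>{1..n}. 0 \<le> w i \<and> w i \<le> 1" and wsum: "(\<Sum>i=1..n. w i) = m"
    and above: "\<forall>i\<in>{1..m}. \<alpha> \<le> \<mu> i" and below: "\<forall>i\<in>{Suc m..n}. \<mu> i \<le> \<alpha> - \<delta>"
  shows "(\<Sum>i=1..n. \<mu> i * w i) \<le> (\<Sum>i=1..m. \<mu> i) - \<delta> * (m - (\<Sum>i=1..m. w i))"
proof -
  define W where "W = (\<Sum>i=1..m. w i)"
  have split: "(\<Sum>i=1..n. f i) = (\<Sum>i=1..m. f i) + (\<Sum>i=Suc m..n. f i)" for f :: "nat \<Rightarrow> real"
  proof -
    have "{1..n} = {1..m} \<union> {Suc m..n}" using mn by auto
    then show ?thesis by (simp add: sum.union_disjoint)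
  qed
  have "\<alpha> * (m - W) = (\<Sum>i=1..m. \<alpha> * (1 - w i))"
    by (simp add: W_def sum_subtractf flip: sum_distrib_left)
  also have "\<dots> \<le> (\<Sum>i=1..m. \<mu> i * (1 - w i))"
    using above w mn by (intro sum_mono mult_right_mono) auto
  finally have head: "(\<Sum>i=1..m. \<mu> i * w i) \<le> (\<Sum>i=1..m. \<mu> i) - \<alpha> * (m - W)"
    by (simp add: algebra_simps sum_subtractf)
  have "(\<Sum>i=Suc m..n. \<mu> i * w i) \<le> (\<Sum>i=Suc m..n. (\<alpha> - \<delta>) * w i)"
    using below w by (intro sum_mono mult_right_mono) auto
  also have "\<dots> = (\<alpha> - \<delta>) * (m - W)"
    using wsum split[of w] by (simp add: W_def sum_distrib_left[symmetric])
  finally show ?thesis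
    using head split[of "\<lambda>i. \<mu> i * w i"] by (simp add: W_def algebra_simps)
qed

lemma ky_fan_eigenframe:
  fixes M :: "real^'n^'n"
  assumes on: "orthonormal_on {1..m} v" and eig: "\<forall>i\<in>{1..m}. M *v v i = \<mu> i *\<^sub>R v i"
  shows "inner M (frame_proj m v) = (\<Sum>i=1..m. \<mu> i)"
  unfolding inner_frame_proj using eig orthonormal_on_inner_self[OF on] by (intro sum.cong) auto

lemma ky_fan_gap_bound:
  fixes M :: "real^'n^'n" and v u :: "nat \<Rightarrow> real^'n"
  assumes on: "orthonormal_on {1..CARD('n)} v" and eig: "\<forall>i\<in>{1..CARD('n)}. M *v v i = \<mu> i *\<^sub>R v i"
    and onu: "orthonormal_on {1..m} u" and mn: "m \<le> CARD('n)"
    and above: "\<forall>i\<in>{1..m}. \<alpha> \<le> \<mu> i" and below: "\<forall>i\<in>{Suc m..CARD('n)}. \<mu> i \<le> \<alpha> - \<delta>"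
  shows "inner M (frame_proj m u) \<le> (\<Sum>i=1..m. \<mu> i) - \<delta> * (m - (\<Sum>i=1..m. \<Sum>j=1..m. (v i \<bullet> u j)\<^sup>2))"
proof -
  define w where "w i = (\<Sum>j=1..m. (v i \<bullet> u j)\<^sup>2)" for i
  have "inner M (frame_proj m u) = (\<Sum>j=1..m. \<Sum>i=1..CARD('n). \<mu> i * (v i \<bullet> u j)\<^sup>2)"
    unfolding inner_frame_proj by (intro sum.cong refl quadratic_form_eigenbasis[OF on eig])
  also have "\<dots> = (\<Sum>i=1..CARD('n). \<mu> i * w i)"
    by (subst sum.swap) (simp add: w_def sum_distrib_left)
  finally have M: "inner M (frame_proj m u) = (\<Sum>i=1..CARD('n). \<mu> i * w i)" .
  have "w i \<le> 1" if "i \<in> {1..CARD('n)}" for i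
    using bessel_inequality[OF onu, of "v i"] orthonormal_on_inner_self[OF on that]
    by (simp add: w_def inner_commute)
  moreover have "0 \<le> w i" for i unfolding w_def by (intro sum_nonneg) simp
  moreover have "(\<Sum>i=1..CARD('n). w i) = m"
  proof -
    have "(\<Sum>i=1..CARD('n). w i) = (\<Sum>j=1..m. u j \<bullet> u j)"
      unfolding w_def by (subst sum.swap) (intro sum.cong refl orthonormal_basis_parseval[OF on])
    also have "\<dots> = m" using orthonormal_on_inner_self[OF onu] by simp
    finally show ?thesis .
  qed
  ultimately show ?thesis
    using weighted_sum_gap_bound[OF mn _ _ above below] by (simp add: M w_def)
qed

lemma inner_gram_frame_proj:
  fixes A :: "real^'n^'n"
  shows "inner (transpose A ** A) (frame_proj m u) = (\<Sum>j=1..m. (norm (A *v u j))\<^sup>2)"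
  by (simp add: inner_frame_proj quadratic_form_transpose_mult)

lemma sing_sq_sum_eq_eigenframe:
  fixes A :: "real^'n^'n"
  assumes on: "orthonormal_on {1..CARD('n)} v"
    and eig: "\<forall>i\<in>{1..CARD('n)}. (transpose A ** A) *v v i = \<mu> i *\<^sub>R v i"
    and sv: "\<forall>i\<in>{1..CARD('n)}. (sing_vals A i)\<^sup>2 = \<mu> i \<and> sing_vals A i \<ge> 0"
    and mn: "m \<le> CARD('n)"
  shows "sing_sq_sum m A = inner (transpose A ** A) (frame_proj m v)"
proof -
  have sub: "{1..m} \<subseteq> {1..CARD('n)}" using mn by auto
  have "inner (transpose A ** A) (frame_proj m v) = (\<Sum>i=1..m. \<mu> i)"
    using orthonormal_on_subset[OF sub on] eig sub by (intro ky_fan_eigenframe) auto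
  then show ?thesis
    unfolding sing_sq_sum_def using sv sub by (auto intro: sum.cong)
qed

lemma ky_fan_max:
  fixes A :: "real^'n^'n"
  assumes onu: "orthonormal_on {1..m} u" and mn: "m \<le> CARD('n)"
  shows "inner (transpose A ** A) (frame_proj m u) \<le> sing_sq_sum m A"
proof -
  obtain v \<mu> where on: "orthonormal_on {1..CARD('n)} v"
    and eig: "\<forall>i\<in>{1..CARD('n)}. (transpose A ** A) *v v i = \<mu> i *\<^sub>R v i"
    and desc: "\<forall>i j. 1 \<le> i \<longrightarrow> i \<le> j \<longrightarrow> j \<le> CARD('n) \<longrightarrow> \<mu> j \<le> \<mu> i"
    and sv: "\<forall>i\<in>{1..CARD('n)}. (sing_vals A i)\<^sup>2 = \<mu> i \<and> sing_vals A i \<ge> 0"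
    by (rule sing_vals_eigenbasis)
  define \<alpha> where "\<alpha> = (if m = 0 then \<mu> 1 else \<mu> m)"
  have "\<forall>i\<in>{1..m}. \<alpha> \<le> \<mu> i" "\<forall>i\<in>{Suc m..CARD('n)}. \<mu> i \<le> \<alpha> - 0"
    using desc mn by (auto simp: \<alpha>_def)
  from ky_fan_gap_bound[OF on eig onu mn this]
  have "inner (transpose A ** A) (frame_proj m u) \<le> (\<Sum>i=1..m. \<mu> i)" by simp
  also have "\<dots> = sing_sq_sum m A"
    unfolding sing_sq_sum_def using sv mn by (intro sum.cong) auto
  finally show ?thesis .
qed

section \<open>Convexity and differentiability of partial sums of squared singular values\<close>

lemma convex_on_norm_add_scaleR_sq:
  fixes X Y :: "'a::real_inner"
  shows "convex_on UNIV (\<lambda>s. (norm (X + s *\<^sub>R Y))\<^sup>2)"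
proof (rule convex_onI)
  fix t x y :: real assume t: "0 < t" "t < 1"
  have expand: "(norm (X + s *\<^sub>R Y))\<^sup>2 = X \<bullet> X + 2 * s * (X \<bullet> Y) + s\<^sup>2 * (Y \<bullet> Y)" for s
    unfolding power2_norm_eq_inner
    by (simp add: inner_add_left inner_add_right inner_commute power2_eq_square algebra_simps)
  have "(1 - t) * (x\<^sup>2 * (Y \<bullet> Y)) + t * (y\<^sup>2 * (Y \<bullet> Y)) - ((1 - t) * x + t * y)\<^sup>2 * (Y \<bullet> Y)
      = (Y \<bullet> Y) * (t * (1 - t) * (x - y)\<^sup>2)"
    by (simp add: power2_eq_square algebra_simps)
  moreover have "(Y \<bullet> Y) * (t * (1 - t) * (x - y)\<^sup>2) \<ge> 0" using t by simp
  ultimately show "(norm (X + ((1 - t) *\<^sub>R x + t *\<^sub>R y) *\<^sub>R Y))\<^sup>2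
      \<le> (1 - t) * (norm (X + x *\<^sub>R Y))\<^sup>2 + t * (norm (X + y *\<^sub>R Y))\<^sup>2"
    unfolding expand by (simp add: algebra_simps)
qed simp

lemma matrix_add_scaleR_vector_mult:
  fixes F H :: "real^'n^'m"
  shows "(F + s *\<^sub>R H) *v x = F *v x + s *\<^sub>R (H *v x)"
  by (simp add: matrix_vector_mult_add_rdistrib scaleR_matrix_vector_assoc)

text \<open>Ky Fan: the partial sum is a maximum of functions that are convex in \<open>s\<close>.\<close>

lemma sing_sq_sum_convex:
  fixes F H :: "real^'n^'n"
  assumes mn: "m \<le> CARD('n)"
  shows "convex_on UNIV (\<lambda>s. sing_sq_sum m (F + s *\<^sub>R H))"
proof (rule convex_onI)
  fix t x y :: real assume t: "0 < t" "t < 1"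
  define z where "z = (1 - t) *\<^sub>R x + t *\<^sub>R y"
  obtain v \<mu> where on: "orthonormal_on {1..CARD('n)} v"
    and eig: "\<forall>i\<in>{1..CARD('n)}. (transpose (F + z *\<^sub>R H) ** (F + z *\<^sub>R H)) *v v i = \<mu> i *\<^sub>R v i"
    and "\<forall>i j. 1 \<le> i \<longrightarrow> i \<le> j \<longrightarrow> j \<le> CARD('n) \<longrightarrow> \<mu> j \<le> \<mu> i"
    and sv: "\<forall>i\<in>{1..CARD('n)}. (sing_vals (F + z *\<^sub>R H) i)\<^sup>2 = \<mu> i \<and> sing_vals (F + z *\<^sub>R H) i \<ge> 0"
    by (rule sing_vals_eigenbasis)
  have onm: "orthonormal_on {1..m} v" using orthonormal_on_subset[OF _ on] mn by auto
  define g where "g s = (\<Sum>j=1..m. (norm (F *v v j + s *\<^sub>R (H *v v j)))\<^sup>2)" for s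
  have g: "g s = inner (transpose (F + s *\<^sub>R H) ** (F + s *\<^sub>R H)) (frame_proj m v)" for s
    by (simp add: g_def inner_gram_frame_proj matrix_add_scaleR_vector_mult)
  have "sing_sq_sum m (F + z *\<^sub>R H) = g z"
    using sing_sq_sum_eq_eigenframe[OF on eig sv mn] g by simp
  also have "g z \<le> (\<Sum>j=1..m. (1 - t) * (norm (F *v v j + x *\<^sub>R (H *v v j)))\<^sup>2
      + t * (norm (F *v v j + y *\<^sub>R (H *v v j)))\<^sup>2)"
    unfolding g_def z_def using t by (intro sum_mono convex_onD[OF convex_on_norm_add_scaleR_sq]) auto
  also have "\<dots> = (1 - t) * g x + t * g y"
    by (simp add: g_def sum.distrib sum_distrib_left)
  also have "\<dots> \<le> (1 - t) * sing_sq_sum m (F + x *\<^sub>R H) + t * sing_sq_sum m (F + y *\<^sub>R H)"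
    using t unfolding g by (intro add_mono mult_left_mono ky_fan_max[OF onm mn]) auto
  finally show "sing_sq_sum m (F + ((1 - t) *\<^sub>R x + t *\<^sub>R y) *\<^sub>R H)
      \<le> (1 - t) * sing_sq_sum m (F + x *\<^sub>R H) + t * sing_sq_sum m (F + y *\<^sub>R H)"
    by (simp add: z_def)
qed simp

lemma norm_add_scaleR_matrix_vector_sq:
  fixes X H :: "real^'n^'n"
  shows "(norm ((X + h *\<^sub>R H) *v x))\<^sup>2 = (norm (X *v x))\<^sup>2 + 2 * h * (x \<bullet> ((transpose X ** H) *v x))
     + h\<^sup>2 * (x \<bullet> ((transpose H ** H) *v x))"
proof -
  have "x \<bullet> ((transpose X ** H) *v x) = (X *v x) \<bullet> (H *v x)"
    by (simp only: matrix_vector_mul_assoc[symmetric] inner_transpose_matrix_vector)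
  moreover have "x \<bullet> ((transpose H ** H) *v x) = (H *v x) \<bullet> (H *v x)"
    by (simp only: quadratic_form_transpose_mult power2_norm_eq_inner)
  ultimately show ?thesis
    unfolding matrix_add_scaleR_vector_mult power2_norm_eq_inner
    by (simp add: inner_add_left inner_add_right inner_commute power2_eq_square algebra_simps)
qed

lemma inner_gram_add_scaleR_frame_proj:
  fixes X H :: "real^'n^'n"
  shows "inner (transpose (X + h *\<^sub>R H) ** (X + h *\<^sub>R H)) (frame_proj m u) =
    inner (transpose X ** X) (frame_proj m u) + 2 * h * inner (transpose X ** H) (frame_proj m u)
     + h\<^sup>2 * inner (transpose H ** H) (frame_proj m u)"
  unfolding inner_gram_frame_proj norm_add_scaleR_matrix_vector_sq
  by (simp add: inner_frame_proj quadratic_form_transpose_mult sum.distrib sum_distrib_left)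

lemma has_real_derivative_quadratic_bound:
  fixes f :: "real \<Rightarrow> real"
  assumes bound: "\<And>s. \<bar>s - t\<bar> \<le> 1 \<Longrightarrow> \<bar>f s - f t - b * (s - t)\<bar> \<le> K * (s - t)\<^sup>2"
  shows "(f has_real_derivative b) (at t)"
proof -
  have "\<forall>\<^sub>F y in at t. y \<in> ball t 1 \<and> y \<noteq> t \<and> y \<in> UNIV"
    by (rule eventually_at_ball') simp
  then have "\<forall>\<^sub>F y in at t. norm ((f y - f t) / (y - t) - b) \<le> K * \<bar>y - t\<bar>"
  proof (rule eventually_mono)
    fix y assume "y \<in> ball t 1 \<and> y \<noteq> t \<and> y \<in> UNIV"
    then have y: "\<bar>y - t\<bar> < 1" "\<bar>y - t\<bar> > 0" by (auto simp: dist_real_def abs_minus_commute)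
    have "norm ((f y - f t) / (y - t) - b) = \<bar>f y - f t - b * (y - t)\<bar> / \<bar>y - t\<bar>"
      using y by (simp add: field_simps)
    also have "\<dots> \<le> K * (y - t)\<^sup>2 / \<bar>y - t\<bar>"
      using y by (intro divide_right_mono bound) auto
    also have "\<dots> = K * \<bar>y - t\<bar>"
      using y by (simp add: field_simps power2_eq_square)
    finally show "norm ((f y - f t) / (y - t) - b) \<le> K * \<bar>y - t\<bar>" .
  qed
  moreover have "((\<lambda>y. K * \<bar>y - t\<bar>) \<longlongrightarrow> 0) (at t)"
    by (auto intro!: tendsto_eq_intros)
  ultimately have "((\<lambda>y. (f y - f t) / (y - t)) \<longlongrightarrow> b) (at t)"
    by (simp add: Lim_null[of _ b] Lim_null_comparison)
  then show ?thesis by (simp add: has_field_derivative_iff)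
qed

lemma completing_square_bound:
  fixes \<delta> r e a K :: real
  assumes "\<delta> > 0" and "r\<^sup>2 = 2 * e"
  shows "- \<delta> * e + a * K * r \<le> a\<^sup>2 * (K\<^sup>2 / (2 * \<delta>))"
proof -
  have "a\<^sup>2 * (K\<^sup>2 / (2 * \<delta>)) - (- \<delta> * e + a * K * r) = (\<delta> * r - a * K)\<^sup>2 / (2 * \<delta>)"
    using assms by (simp add: field_simps power2_eq_square)
  moreover have "(\<delta> * r - a * K)\<^sup>2 / (2 * \<delta>) \<ge> 0" using assms by simp
  ultimately show ?thesis by linarith
qed

lemma inner_perturbation_bound:
  fixes N C D :: "'a::real_inner"
  assumes h: "\<bar>h\<bar> \<le> 1"
  shows "2 * h * inner N D + h\<^sup>2 * inner C D \<le> \<bar>h\<bar> * (2 * norm N + norm C) * norm D"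
proof -
  have "2 * h * inner N D \<le> 2 * \<bar>h\<bar> * \<bar>inner N D\<bar>"
    by (metis abs_ge_self abs_mult abs_numeral mult.assoc)
  also have "\<dots> \<le> 2 * \<bar>h\<bar> * (norm N * norm D)"
    using Cauchy_Schwarz_ineq2[of N D] by (intro mult_left_mono) auto
  finally have linear: "2 * h * inner N D \<le> 2 * \<bar>h\<bar> * (norm N * norm D)" .
  have "h\<^sup>2 * inner C D \<le> h\<^sup>2 * (norm C * norm D)"
    using Cauchy_Schwarz_ineq2[of C D] by (intro mult_left_mono) auto
  also have "\<dots> \<le> \<bar>h\<bar> * (norm C * norm D)"
  proof (rule mult_right_mono)
    have "\<bar>h\<bar> * \<bar>h\<bar> \<le> 1 * \<bar>h\<bar>" using h by (intro mult_right_mono) auto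
    then show "h\<^sup>2 \<le> \<bar>h\<bar>" by (simp add: power2_eq_square)
  qed simp
  finally show ?thesis using linear by (simp add: algebra_simps)
qed

text \<open>With a spectral gap \<open>\<delta>\<close> after the \<open>m\<close>-th eigenvalue of \<open>X\<^sup>T X\<close>, Ky Fan's bound
  penalises any frame at squared distance \<open>r\<^sup>2\<close> from the top eigenframe by \<open>\<delta> r\<^sup>2 / 2\<close>,
  while moving along \<open>H\<close> gains at most \<open>O(h r)\<close>; balancing the two gives \<open>O(h\<^sup>2)\<close>.\<close>

lemma sing_sq_sum_gap_upper_bound:
  fixes X H :: "real^'n^'n"
  assumes on: "orthonormal_on {1..CARD('n)} v"
    and eig: "\<forall>i\<in>{1..CARD('n)}. (transpose X ** X) *v v i = \<mu> i *\<^sub>R v i"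
    and mn: "m \<le> CARD('n)" and \<delta>: "\<delta> > 0"
    and above: "\<forall>i\<in>{1..m}. \<alpha> \<le> \<mu> i" and below: "\<forall>i\<in>{Suc m..CARD('n)}. \<mu> i \<le> \<alpha> - \<delta>"
    and h: "\<bar>h\<bar> \<le> 1"
  defines "K \<equiv> 2 * norm (transpose X ** H) + norm (transpose H ** H)"
  shows "sing_sq_sum m (X + h *\<^sub>R H)
    \<le> inner (transpose (X + h *\<^sub>R H) ** (X + h *\<^sub>R H)) (frame_proj m v) + h\<^sup>2 * (K\<^sup>2 / (2 * \<delta>))"
proof -
  define P where "P = frame_proj m v"
  define N where "N = transpose X ** H"
  define C where "C = transpose H ** H"
  obtain w \<nu> where onw: "orthonormal_on {1..CARD('n)} w"
    and eigw: "\<forall>i\<in>{1..CARD('n)}. (transpose (X + h *\<^sub>R H) ** (X + h *\<^sub>R H)) *v w i = \<nu> i *\<^sub>R w i"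
    and "\<forall>i j. 1 \<le> i \<longrightarrow> i \<le> j \<longrightarrow> j \<le> CARD('n) \<longrightarrow> \<nu> j \<le> \<nu> i"
    and svw: "\<forall>i\<in>{1..CARD('n)}. (sing_vals (X + h *\<^sub>R H) i)\<^sup>2 = \<nu> i \<and> sing_vals (X + h *\<^sub>R H) i \<ge> 0"
    by (rule sing_vals_eigenbasis)
  have sub: "{1..m} \<subseteq> {1..CARD('n)}" using mn by auto
  have onm: "orthonormal_on {1..m} v" and onwm: "orthonormal_on {1..m} w"
    using orthonormal_on_subset[OF sub] on onw by auto
  define e where "e = m - (\<Sum>i=1..m. \<Sum>j=1..m. (v i \<bullet> w j)\<^sup>2)"
  define r where "r = norm (frame_proj m w - P)"
  have r2: "r\<^sup>2 = 2 * e" using norm_frame_proj_diff[OF onwm onm] by (simp add: r_def e_def P_def)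
  have "inner (transpose X ** X) (frame_proj m w) \<le> (\<Sum>i=1..m. \<mu> i) - \<delta> * e"
    using ky_fan_gap_bound[OF on eig onwm mn above below] by (simp add: e_def)
  also have "(\<Sum>i=1..m. \<mu> i) = inner (transpose X ** X) P"
    unfolding P_def using onm eig sub by (intro ky_fan_eigenframe[symmetric]) auto
  finally have gap: "inner (transpose X ** X) (frame_proj m w - P) \<le> - \<delta> * e"
    by (simp add: inner_diff_right)
  have perturbation: "2 * h * inner N (frame_proj m w - P) + h\<^sup>2 * inner C (frame_proj m w - P)
      \<le> \<bar>h\<bar> * K * r"
    unfolding K_def N_def C_def r_def by (rule inner_perturbation_bound[OF h])
  have "sing_sq_sum m (X + h *\<^sub>R H) = inner (transpose (X + h *\<^sub>R H) ** (X + h *\<^sub>R H)) (frame_proj m w)"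
    by (rule sing_sq_sum_eq_eigenframe[OF onw eigw svw mn])
  also have "\<dots> = inner (transpose (X + h *\<^sub>R H) ** (X + h *\<^sub>R H)) P
      + inner (transpose X ** X) (frame_proj m w - P) + 2 * h * inner N (frame_proj m w - P)
      + h\<^sup>2 * inner C (frame_proj m w - P)"
    unfolding P_def N_def C_def inner_gram_add_scaleR_frame_proj by (simp add: inner_diff_right algebra_simps)
  also have "\<dots> \<le> inner (transpose (X + h *\<^sub>R H) ** (X + h *\<^sub>R H)) P + (- \<delta> * e + \<bar>h\<bar> * K * r)"
    using gap perturbation by simp
  also have "\<dots> \<le> inner (transpose (X + h *\<^sub>R H) ** (X + h *\<^sub>R H)) P + \<bar>h\<bar>\<^sup>2 * (K\<^sup>2 / (2 * \<delta>))"
    using completing_square_bound[OF \<delta> r2, of "\<bar>h\<bar>" K] by simp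
  finally show ?thesis by (simp add: P_def)
qed

lemma sing_sq_sum_differentiable_sq_gap:
  fixes F H :: "real^'n^'n"
  assumes mn: "m \<le> CARD('n)" and \<delta>: "\<delta> > 0"
    and above: "\<forall>i\<in>{1..m}. \<alpha> \<le> (sing_vals (F + t *\<^sub>R H) i)\<^sup>2"
    and below: "\<forall>i\<in>{Suc m..CARD('n)}. (sing_vals (F + t *\<^sub>R H) i)\<^sup>2 \<le> \<alpha> - \<delta>"
  shows "(\<lambda>s. sing_sq_sum m (F + s *\<^sub>R H)) differentiable (at t)"
proof -
  define S where "S s = sing_sq_sum m (F + s *\<^sub>R H)" for s
  define X where "X = F + t *\<^sub>R H"
  have shift: "F + s *\<^sub>R H = X + (s - t) *\<^sub>R H" for s by (simp add: X_def algebra_simps)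
  obtain v \<mu> where on: "orthonormal_on {1..CARD('n)} v"
    and eig: "\<forall>i\<in>{1..CARD('n)}. (transpose X ** X) *v v i = \<mu> i *\<^sub>R v i"
    and "\<forall>i j. 1 \<le> i \<longrightarrow> i \<le> j \<longrightarrow> j \<le> CARD('n) \<longrightarrow> \<mu> j \<le> \<mu> i"
    and sv: "\<forall>i\<in>{1..CARD('n)}. (sing_vals X i)\<^sup>2 = \<mu> i \<and> sing_vals X i \<ge> 0"
    by (rule sing_vals_eigenbasis)
  have above': "\<forall>i\<in>{1..m}. \<alpha> \<le> \<mu> i" and below': "\<forall>i\<in>{Suc m..CARD('n)}. \<mu> i \<le> \<alpha> - \<delta>"
    using above below sv mn by (auto simp: X_def)
  have onm: "orthonormal_on {1..m} v" using orthonormal_on_subset[OF _ on] mn by auto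
  define P where "P = frame_proj m v"
  define b where "b = 2 * inner (transpose X ** H) P"
  define c where "c = inner (transpose H ** H) P"
  define K where "K = (2 * norm (transpose X ** H) + norm (transpose H ** H))\<^sup>2 / (2 * \<delta>)"
  text \<open>The quadratic \<open>g\<close> touches \<open>S\<close> from below at \<open>t\<close> and stays within \<open>O((s - t)\<^sup>2)\<close> of it.\<close>
  define g where "g s = inner (transpose (F + s *\<^sub>R H) ** (F + s *\<^sub>R H)) P" for s
  have St: "S t = inner (transpose X ** X) P"
    using sing_sq_sum_eq_eigenframe[OF on eig sv mn] by (simp add: S_def X_def P_def)
  have g: "g s = S t + b * (s - t) + c * (s - t)\<^sup>2" for s
    unfolding g_def shift St b_def c_def P_def inner_gram_add_scaleR_frame_proj by (simp add: algebra_simps)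
  have "\<bar>S s - S t - b * (s - t)\<bar> \<le> (K + \<bar>c\<bar>) * (s - t)\<^sup>2" if "\<bar>s - t\<bar> \<le> 1" for s
  proof -
    have "g s \<le> S s" unfolding g_def S_def P_def by (rule ky_fan_max[OF onm mn])
    moreover have "S s \<le> g s + K * (s - t)\<^sup>2"
      using sing_sq_sum_gap_upper_bound[OF on eig mn \<delta> above' below' that]
      by (simp add: S_def g_def shift K_def P_def mult.commute)
    ultimately have "\<bar>S s - g s\<bar> \<le> K * (s - t)\<^sup>2" by simp
    moreover have "\<bar>S s - S t - b * (s - t)\<bar> \<le> \<bar>S s - g s\<bar> + \<bar>c * (s - t)\<^sup>2\<bar>"
      using abs_triangle_ineq[of "S s - g s" "c * (s - t)\<^sup>2"] by (simp add: g)
    moreover have "\<bar>c * (s - t)\<^sup>2\<bar> = \<bar>c\<bar> * (s - t)\<^sup>2" by (simp add: abs_mult)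
    ultimately show ?thesis by (simp add: distrib_right)
  qed
  then have "(S has_real_derivative b) (at t)"
    by (rule has_real_derivative_quadratic_bound)
  then show ?thesis unfolding S_def by (auto simp: real_differentiable_def)
qed

lemma sing_sq_sum_differentiable_at_gap:
  fixes F H :: "real^'n^'n"
  assumes mn: "m \<le> CARD('n)"
    and gap: "1 \<le> m \<and> m < CARD('n) \<longrightarrow> sing_vals (F + t *\<^sub>R H) (Suc m) < sing_vals (F + t *\<^sub>R H) m"
  shows "(\<lambda>s. sing_sq_sum m (F + s *\<^sub>R H)) differentiable (at t)"
proof -
  define \<sigma> where "\<sigma> i = sing_vals (F + t *\<^sub>R H) i" for i
  have sq_anti: "(\<sigma> k)\<^sup>2 \<le> (\<sigma> i)\<^sup>2" if "1 \<le> i" "i \<le> k" "k \<le> CARD('n)" for i k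
    unfolding \<sigma>_def using that by (intro power_mono sing_vals_antimono sing_vals_nonneg)
  consider "m = 0" | "m = CARD('n)" | "1 \<le> m" "m < CARD('n)" using mn by linarith
  then show ?thesis
  proof cases
    case 1
    then show ?thesis by (simp add: sing_sq_sum_def)
  next
    case 2
    show ?thesis
      using sq_anti 2 by (intro sing_sq_sum_differentiable_sq_gap[OF mn, of 1 "(\<sigma> m)\<^sup>2"]) (auto simp: \<sigma>_def)
  next
    case 3
    have "\<sigma> (Suc m) < \<sigma> m" "0 \<le> \<sigma> (Suc m)"
      using gap 3 sing_vals_nonneg by (auto simp: \<sigma>_def)
    then have "(\<sigma> (Suc m))\<^sup>2 < (\<sigma> m)\<^sup>2" by (intro power_strict_mono) auto
    then show ?thesis
      using sq_anti 3
      by (intro sing_sq_sum_differentiable_sq_gap[OF mn, of "(\<sigma> m)\<^sup>2 - (\<sigma> (Suc m))\<^sup>2" "(\<sigma> m)\<^sup>2"])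
        (auto simp: \<sigma>_def)
  qed
qed

section \<open>One-sided derivatives of the singular values\<close>

lemma convex_on_one_sided_derivatives:
  fixes f :: "real \<Rightarrow> real"
  assumes cf: "convex_on UNIV f"
  obtains L R where "(f has_real_derivative L) (at t within {..t})"
    "(f has_real_derivative R) (at t within {t..})" "L \<le> R"
proof -
  define q where "q y = (f y - f t) / (y - t)" for y
  have slope_swap: "(f y - f t) / (y - t) = (f t - f y) / (t - y)" for y
    by (metis minus_diff_eq minus_divide_divide)
  have mono: "q y1 \<le> q y2" if y: "y1 \<le> y2" "y1 \<noteq> t" "y2 \<noteq> t" for y1 y2
  proof (cases "y1 = y2")
    case False
    then consider "y2 < t" | "y1 < t" "t < y2" | "t < y1" using y by linarith
    then show ?thesis
    proof cases
      case 1
      then show ?thesis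
        using convex_on_slope_le(2)[OF cf _ _ _ 1, of y1] False y slope_swap[of y2] by (simp add: q_def)
    next
      case 2
      then show ?thesis
        using convex_on_slope_le[OF cf _ _ 2] slope_swap[of y2] by (simp add: q_def)
    next
      case 3
      then show ?thesis
        using convex_on_slope_le(1)[OF cf _ _ 3, of y2] False y slope_swap[of y1] slope_swap[of y2]
        by (simp add: q_def)
    qed
  qed simp
  have right: "(q \<longlongrightarrow> Inf (q ` {t<..})) (at_right t)"
    using Lim_right_bound[of UNIV t q "q (t - 1)"] mono by simp
  have left: "(q \<longlongrightarrow> Sup (q ` {..<t})) (at_left t)"
    using Lim_left_bound[of UNIV t q "q (t + 1)"] mono by simp
  have "Sup (q ` {..<t}) \<le> Inf (q ` {t<..})"
  proof (rule cInf_greatest)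
    fix z assume "z \<in> q ` {t<..}"
    then show "Sup (q ` {..<t}) \<le> z" using mono by (auto intro!: cSup_least)
  qed simp
  moreover have "(f has_real_derivative Sup (q ` {..<t})) (at t within {..t})"
    using left unfolding has_field_derivative_iff at_within_Iic_at_left q_def .
  moreover have "(f has_real_derivative Inf (q ` {t<..})) (at t within {t..})"
    using right unfolding has_field_derivative_iff at_within_Ici_at_right q_def .
  ultimately show ?thesis using that by blast
qed

lemma sing_sq_sum_one_sided_derivatives:
  fixes F H :: "real^'n^'n"
  obtains L R :: "nat \<Rightarrow> real" where
    "\<And>m. m \<le> CARD('n) \<Longrightarrow>
      ((\<lambda>s. sing_sq_sum m (F + s *\<^sub>R H)) has_real_derivative L m) (at t within {..t})"
    "\<And>m. m \<le> CARD('n) \<Longrightarrow>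
      ((\<lambda>s. sing_sq_sum m (F + s *\<^sub>R H)) has_real_derivative R m) (at t within {t..})"
    "\<And>m. m \<le> CARD('n) \<Longrightarrow> L m \<le> R m"
    "\<And>m. m \<le> CARD('n) \<Longrightarrow>
      (1 \<le> m \<and> m < CARD('n) \<longrightarrow> sing_vals (F + t *\<^sub>R H) (Suc m) < sing_vals (F + t *\<^sub>R H) m) \<Longrightarrow>
      L m = R m"
proof -
  have "\<forall>m. \<exists>L R. m \<le> CARD('n) \<longrightarrow>
      ((\<lambda>s. sing_sq_sum m (F + s *\<^sub>R H)) has_real_derivative L) (at t within {..t}) \<and>
      ((\<lambda>s. sing_sq_sum m (F + s *\<^sub>R H)) has_real_derivative R) (at t within {t..}) \<and> L \<le> R"
    by (metis convex_on_one_sided_derivatives sing_sq_sum_convex)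
  then obtain L R where L: "\<And>m. m \<le> CARD('n) \<Longrightarrow>
      ((\<lambda>s. sing_sq_sum m (F + s *\<^sub>R H)) has_real_derivative L m) (at t within {..t})"
    and R: "\<And>m. m \<le> CARD('n) \<Longrightarrow>
      ((\<lambda>s. sing_sq_sum m (F + s *\<^sub>R H)) has_real_derivative R m) (at t within {t..})"
    and "\<And>m. m \<le> CARD('n) \<Longrightarrow> L m \<le> R m"
    by metis
  moreover have "L m = R m"
    if mn: "m \<le> CARD('n)"
      and gap: "1 \<le> m \<and> m < CARD('n) \<longrightarrow> sing_vals (F + t *\<^sub>R H) (Suc m) < sing_vals (F + t *\<^sub>R H) m" for m
  proof -
    obtain D where D: "((\<lambda>s. sing_sq_sum m (F + s *\<^sub>R H)) has_real_derivative D) (at t)"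
      using sing_sq_sum_differentiable_at_gap[OF mn gap] by (auto simp: real_differentiable_def)
    have "L m = D"
      using L[OF mn] has_field_derivative_at_within[OF D]
      by (rule has_field_derivative_unique) (simp add: at_within_Iic_at_left)
    moreover have "R m = D"
      using R[OF mn] has_field_derivative_at_within[OF D]
      by (rule has_field_derivative_unique) (simp add: at_within_Ici_at_right)
    ultimately show ?thesis by simp
  qed
  ultimately show ?thesis using that by blast
qed

lemma sing_vals_eq_sqrt_sing_sq_sum_diff:
  fixes A :: "real^'n^'n"
  assumes "i \<ge> 1"
  shows "sing_vals A i = sqrt (sing_sq_sum i A - sing_sq_sum (i - 1) A)"
proof -
  obtain k where "i = Suc k" using assms by (cases i) auto
  then show ?thesis
    by (simp add: sing_sq_sum_def sum.cl_ivl_Suc sing_vals_nonneg)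
qed

lemma sing_vals_has_derivative_within:
  fixes F H :: "real^'n^'n"
  assumes det: "det (F + t *\<^sub>R H) \<noteq> 0" and i: "i \<in> {1..CARD('n)}"
    and D: "((\<lambda>s. sing_sq_sum i (F + s *\<^sub>R H)) has_real_derivative D) (at t within T)"
    and D': "((\<lambda>s. sing_sq_sum (i - 1) (F + s *\<^sub>R H)) has_real_derivative D') (at t within T)"
  shows "((\<lambda>s. sing_vals (F + s *\<^sub>R H) i) has_real_derivative
      (D - D') / (2 * sing_vals (F + t *\<^sub>R H) i)) (at t within T)"
proof -
  define d where "d s = sing_sq_sum i (F + s *\<^sub>R H) - sing_sq_sum (i - 1) (F + s *\<^sub>R H)" for s
  have \<sigma>: "sing_vals (F + s *\<^sub>R H) i = sqrt (d s)" for s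
    unfolding d_def using i by (simp add: sing_vals_eq_sqrt_sing_sq_sum_diff)
  have "0 < sing_vals (F + t *\<^sub>R H) i" by (rule sing_vals_pos[OF det i])
  then have "0 < d t" by (simp add: \<sigma>)
  moreover have "(d has_real_derivative D - D') (at t within T)"
    unfolding d_def by (rule DERIV_diff[OF D D'])
  ultimately have "((\<lambda>s. sqrt (d s)) has_real_derivative inverse (sqrt (d t)) / 2 * (D - D')) (at t within T)"
    by (rule DERIV_chain2[OF DERIV_real_sqrt])
  then show ?thesis by (simp add: \<sigma> field_simps)
qed

lemma antimono_level_set_interval:
  fixes \<sigma> :: "nat \<Rightarrow> real"
  assumes anti: "\<And>i k. 1 \<le> i \<Longrightarrow> i \<le> k \<Longrightarrow> k \<le> n \<Longrightarrow> \<sigma> k \<le> \<sigma> i" and j: "j \<in> {1..n}"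
  shows "\<exists>a b. 1 \<le> a \<and> b \<le> n \<and> {i\<in>{1..n}. \<sigma> i = \<sigma> j} = {a..b} \<and>
    (1 < a \<longrightarrow> \<sigma> a < \<sigma> (a - 1)) \<and> (b < n \<longrightarrow> \<sigma> (Suc b) < \<sigma> b)"
proof -
  define J where "J = {i\<in>{1..n}. \<sigma> i = \<sigma> j}"
  have fin: "finite J" and ne: "J \<noteq> {}" using j by (auto simp: J_def)
  define a where "a = Min J"
  define b where "b = Max J"
  have aJ: "a \<in> J" and bJ: "b \<in> J" using Min_in Max_in fin ne by (auto simp: a_def b_def)
  have bounds: "a \<le> i" "i \<le> b" if "i \<in> J" for i
    using Min_le Max_ge fin that by (auto simp: a_def b_def)
  have "J = {a..b}"
  proof
    show "J \<subseteq> {a..b}" using bounds by auto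
    show "{a..b} \<subseteq> J"
    proof
      fix i assume i: "i \<in> {a..b}"
      moreover have "1 \<le> a" "b \<le> n" using aJ bJ by (auto simp: J_def)
      ultimately have "\<sigma> b \<le> \<sigma> i" "\<sigma> i \<le> \<sigma> a" "1 \<le> i" "i \<le> n"
        using anti[of i b] anti[of a i] by auto
      then show "i \<in> J" using aJ bJ by (auto simp: J_def)
    qed
  qed
  moreover have "\<sigma> a < \<sigma> (a - 1)" if "1 < a"
  proof -
    have "a - 1 \<notin> J" using bounds[of "a - 1"] that by fastforce
    moreover have "\<sigma> a \<le> \<sigma> (a - 1)" using that aJ anti[of "a - 1" a] by (auto simp: J_def)
    ultimately show ?thesis using that aJ by (auto simp: J_def)
  qed
  moreover have "\<sigma> (Suc b) < \<sigma> b" if "b < n"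
  proof -
    have "Suc b \<notin> J" using bounds[of "Suc b"] by fastforce
    moreover have "\<sigma> (Suc b) \<le> \<sigma> b" using that bJ anti[of b "Suc b"] by (auto simp: J_def)
    ultimately show ?thesis using that bJ by (auto simp: J_def)
  qed
  moreover have "1 \<le> a" "b \<le> n" using aJ bJ by (auto simp: J_def)
  ultimately show ?thesis unfolding J_def by blast
qed

lemma sum_diff_quotient_telescope:
  fixes f \<sigma> :: "nat \<Rightarrow> real"
  assumes "1 \<le> a" "a \<le> k" and "\<And>i. i \<in> {a..k} \<Longrightarrow> \<sigma> i = c"
  shows "(\<Sum>i=a..k. (f i - f (i - 1)) / (2 * \<sigma> i)) = (f k - f (a - 1)) / (2 * c)"
proof -
  have "(\<Sum>i=a..k. (f i - f (i - 1)) / (2 * \<sigma> i)) = (\<Sum>i=Suc (a - 1)..k. f i - f (i - 1)) / (2 * c)"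
    using assms by (simp add: sum_divide_distrib)
  also have "\<dots> = (f k - f (a - 1)) / (2 * c)"
    using assms by (subst sum_telescope'') auto
  finally show ?thesis .
qed

text \<open>Over a block of equal values \<open>\<sigma> a = \<dots> = \<sigma> b\<close> the difference quotients telescope, and
  the partial sums \<open>L\<close>, \<open>R\<close> agree at both ends of the block because the block is
  separated from its neighbours by gaps.\<close>

lemma level_set_one_sided_sums:
  fixes \<sigma> L R :: "nat \<Rightarrow> real"
  assumes anti: "\<And>i k. 1 \<le> i \<Longrightarrow> i \<le> k \<Longrightarrow> k \<le> n \<Longrightarrow> \<sigma> k \<le> \<sigma> i"
    and LR: "\<And>m. m \<le> n \<Longrightarrow> L m \<le> R m"
    and gap: "\<And>m. m \<le> n \<Longrightarrow> (1 \<le> m \<and> m < n \<longrightarrow> \<sigma> (Suc m) < \<sigma> m) \<Longrightarrow> L m = R m"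
    and j: "j \<in> {1..n}" and pos: "\<sigma> j > 0"
  defines "J \<equiv> {i\<in>{1..n}. \<sigma> i = \<sigma> j}"
  shows "(\<Sum>i\<in>J. (L i - L (i - 1)) / (2 * \<sigma> i)) = (\<Sum>i\<in>J. (R i - R (i - 1)) / (2 * \<sigma> i))"
    and "\<forall>k\<in>J. (\<Sum>i\<in>{i\<in>J. i \<le> k}. (L i - L (i - 1)) / (2 * \<sigma> i))
      \<le> (\<Sum>i\<in>{i\<in>J. i \<le> k}. (R i - R (i - 1)) / (2 * \<sigma> i))"
proof -
  obtain a b where a: "1 \<le> a" and b: "b \<le> n" and level: "{i\<in>{1..n}. \<sigma> i = \<sigma> j} = {a..b}"
    and gap_a: "1 < a \<longrightarrow> \<sigma> a < \<sigma> (a - 1)" and gap_b: "b < n \<longrightarrow> \<sigma> (Suc b) < \<sigma> b"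
    using antimono_level_set_interval[OF anti j] by iprover
  have J: "J = {a..b}" using level by (simp add: J_def)
  have telescope: "(\<Sum>i\<in>{i\<in>J. i \<le> k}. (f i - f (i - 1)) / (2 * \<sigma> i)) = (f k - f (a - 1)) / (2 * \<sigma> j)"
    if "k \<in> J" for f :: "nat \<Rightarrow> real" and k
  proof -
    have block: "{i\<in>J. i \<le> k} = {a..k}" and "a \<le> k" using that by (auto simp: J)
    have "\<sigma> i = \<sigma> j" if "i \<in> {a..k}" for i
    proof -
      have "i \<in> J" using that \<open>k \<in> J\<close> by (auto simp: J)
      then show ?thesis by (simp add: J_def)
    qed
    then show ?thesis
      unfolding block by (rule sum_diff_quotient_telescope[OF a \<open>a \<le> k\<close>])
  qed
  have jJ: "j \<in> J" using j by (simp add: J_def)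
  then have bJ: "b \<in> J" and "a \<le> b" using J by auto
  have "L (a - 1) = R (a - 1)"
    using \<open>a \<le> b\<close> b gap_a by (intro gap) auto
  moreover have "L b = R b" using b gap_b by (intro gap) auto
  moreover have "{i\<in>J. i \<le> b} = J" using J by auto
  ultimately show "(\<Sum>i\<in>J. (L i - L (i - 1)) / (2 * \<sigma> i)) = (\<Sum>i\<in>J. (R i - R (i - 1)) / (2 * \<sigma> i))"
    using telescope[OF bJ, of L] telescope[OF bJ, of R] by simp
  show "\<forall>k\<in>J. (\<Sum>i\<in>{i\<in>J. i \<le> k}. (L i - L (i - 1)) / (2 * \<sigma> i))
      \<le> (\<Sum>i\<in>{i\<in>J. i \<le> k}. (R i - R (i - 1)) / (2 * \<sigma> i))"
  proof
    fix k assume k: "k \<in> J"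
    then have "L k \<le> R k" using LR by (simp add: J_def)
    then have "L k - L (a - 1) \<le> R k - R (a - 1)" using \<open>L (a - 1) = R (a - 1)\<close> by simp
    then show "(\<Sum>i\<in>{i\<in>J. i \<le> k}. (L i - L (i - 1)) / (2 * \<sigma> i))
      \<le> (\<Sum>i\<in>{i\<in>J. i \<le> k}. (R i - R (i - 1)) / (2 * \<sigma> i))"
      unfolding telescope[OF k] using pos by (intro divide_right_mono) auto
  qed
qed

lemma sing_vals_one_sided_derivatives:
  fixes F H :: "real^'n^'n"
  assumes det: "det (F + t *\<^sub>R H) \<noteq> 0"
  shows "\<exists>dl dr :: nat \<Rightarrow> real.
     (\<forall>i\<in>{1..CARD('n)}.
        ((\<lambda>s. sing_vals (F + s *\<^sub>R H) i) has_real_derivative dl i) (at t within {..t}) \<and>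
        ((\<lambda>s. sing_vals (F + s *\<^sub>R H) i) has_real_derivative dr i) (at t within {t..})) \<and>
     (\<forall>j\<in>{1..CARD('n)}.
        let J = {i\<in>{1..CARD('n)}. sing_vals (F + t *\<^sub>R H) i = sing_vals (F + t *\<^sub>R H) j} in
        (\<Sum>i\<in>J. dl i) = (\<Sum>i\<in>J. dr i) \<and>
        (\<forall>k\<in>J. (\<Sum>i\<in>{i\<in>J. i \<le> k}. dl i) \<le> (\<Sum>i\<in>{i\<in>J. i \<le> k}. dr i)))"
proof -
  obtain L R where L: "\<And>m. m \<le> CARD('n) \<Longrightarrow>
      ((\<lambda>s. sing_sq_sum m (F + s *\<^sub>R H)) has_real_derivative L m) (at t within {..t})"
    and R: "\<And>m. m \<le> CARD('n) \<Longrightarrow>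
      ((\<lambda>s. sing_sq_sum m (F + s *\<^sub>R H)) has_real_derivative R m) (at t within {t..})"
    and LR: "\<And>m. m \<le> CARD('n) \<Longrightarrow> L m \<le> R m"
    and gap: "\<And>m. m \<le> CARD('n) \<Longrightarrow>
      (1 \<le> m \<and> m < CARD('n) \<longrightarrow> sing_vals (F + t *\<^sub>R H) (Suc m) < sing_vals (F + t *\<^sub>R H) m) \<Longrightarrow>
      L m = R m"
    by (rule sing_sq_sum_one_sided_derivatives) (rule that)
  define dl where "dl i = (L i - L (i - 1)) / (2 * sing_vals (F + t *\<^sub>R H) i)" for i
  define dr where "dr i = (R i - R (i - 1)) / (2 * sing_vals (F + t *\<^sub>R H) i)" for i
  have "\<forall>i\<in>{1..CARD('n)}.
      ((\<lambda>s. sing_vals (F + s *\<^sub>R H) i) has_real_derivative dl i) (at t within {..t}) \<and>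
      ((\<lambda>s. sing_vals (F + s *\<^sub>R H) i) has_real_derivative dr i) (at t within {t..})"
    unfolding dl_def dr_def by (auto intro!: sing_vals_has_derivative_within[OF det] L R)
  moreover have "\<forall>j\<in>{1..CARD('n)}.
      let J = {i\<in>{1..CARD('n)}. sing_vals (F + t *\<^sub>R H) i = sing_vals (F + t *\<^sub>R H) j} in
      (\<Sum>i\<in>J. dl i) = (\<Sum>i\<in>J. dr i) \<and>
      (\<forall>k\<in>J. (\<Sum>i\<in>{i\<in>J. i \<le> k}. dl i) \<le> (\<Sum>i\<in>{i\<in>J. i \<le> k}. dr i))"
  proof
    fix j assume j: "j \<in> {1..CARD('n)}"
    note sums = level_set_one_sided_sums[where \<sigma> = "sing_vals (F + t *\<^sub>R H)",
        OF sing_vals_antimono LR gap j sing_vals_pos[OF det j]]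
    show "let J = {i\<in>{1..CARD('n)}. sing_vals (F + t *\<^sub>R H) i = sing_vals (F + t *\<^sub>R H) j} in
      (\<Sum>i\<in>J. dl i) = (\<Sum>i\<in>J. dr i) \<and>
      (\<forall>k\<in>J. (\<Sum>i\<in>{i\<in>J. i \<le> k}. dl i) \<le> (\<Sum>i\<in>{i\<in>J. i \<le> k}. dr i))"
      unfolding dl_def dr_def Let_def using sums by (intro conjI)
  qed
  ultimately show ?thesis by blast
qed

theorem lemma4p3:
  fixes F H :: "real^'n^'n" and I :: "real set"
  assumes "is_interval I"
    and "\<forall>t\<in>I. det (F + t *\<^sub>R H) > 0"
  shows "\<forall>t\<in>interior I. \<exists>dl dr :: nat \<Rightarrow> real.
     (\<forall>i\<in>{1..CARD('n)}.
        ((\<lambda>s. sing_vals (F + s *\<^sub>R H) i) has_real_derivative dl i) (at t within {..t}) \<and>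
        ((\<lambda>s. sing_vals (F + s *\<^sub>R H) i) has_real_derivative dr i) (at t within {t..})) \<and>
     (\<forall>j\<in>{1..CARD('n)}.
        let J = {i\<in>{1..CARD('n)}. sing_vals (F + t *\<^sub>R H) i = sing_vals (F + t *\<^sub>R H) j} in
        (\<Sum>i\<in>J. dl i) = (\<Sum>i\<in>J. dr i) \<and>
        (\<forall>k\<in>J. (\<Sum>i\<in>{i\<in>J. i \<le> k}. dl i) \<le> (\<Sum>i\<in>{i\<in>J. i \<le> k}. dr i)))"
  using assms(2) interior_subset
  by (intro ballI sing_vals_one_sided_derivatives) fastforce

end
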